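(* Let $N$ be a positive integer (the input size) and let $M = N^{O(1)}$ be a positive integer (the input range). Then there exists a one-layer transformer with a single head of sum-of-determinants $2$-simplicial attention (defined in the context) with attention head dimension $d = 7$ such that for every input $X = (x_1,\dots,x_N) \in [M]^N$ and every $i \in \{1,\dots,N\}$, the transformer's output at position $i$ equals $1$ if there exist $j_1, j_2 \in \{1,\dots,N\}$ with $x_i + x_{j_1} + x_{j_2} \equiv 0 \pmod M$, and equals $0$ otherwise.
   Context: $[M]=\{0,1,\dots,M-1\}$ (residues mod $M$). The transformer model class: each input element $x_j$ is mapped by an input MLP $\phi$ to an embedding $\phi(x_j)$; linear maps $Q, K, K'$ produce the query ${\bm q}_i = Q\phi(x_i)\in\mathbb{R}^d$ and keys ${\bm k}_{j} = K\phi(x_{j})$, ${\bm k}'_{j} = K'\phi(x_{j})$, and linear maps $V, V'$ produce values ${\bm v}_j = V\phi(x_j)$, ${\bm v}'_j = V'\phi(x_j)$. For a vector ${\bm u}$, write ${\bm u}^{(l)}$ for its $l$-th consecutive block of $3$ coordinates (coordinates $3(l-1)+1,\dots,3l$). The attention logit for query position $i$ and key pair $(j_1,j_2)$ is the sum-of-determinants trilinear form $A_{i j_1 j_2} = \sum_{l} \det\big([{\bm q}_i^{(l)}, {\bm k}_{j_1}^{(l)}, {{\bm k}'_{j_2}}^{(l)}]\big)$ over the complete $3$-coordinate blocks (for $d=7$, blocks $l=1,2$), where $[\cdot,\cdot,\cdot]$ stacks the three $3$-vectors into a $3\times 3$ matrix. Attention weights are the softmax of the logits over all pairs $(j_1,j_2)$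 (and, as in the standard Match-type constructions, over an additional designated "blank" pair whose logit is ${\bm q}_i\cdot{\bm k}_{\mathrm{blank}}$ for a fixed key vector ${\bm k}_{\mathrm{blank}}\in\mathbb{R}^d$ and whose value is a fixed vector), and the attention output at position $i$ is $\sum_{j_1,j_2} S_{i j_1 j_2}\,({\bm v}_{j_1}\circ {\bm v}'_{j_2})$ plus the blank pair's weighted value, where $\circ$ is the elementwise product. The final output at position $i$ is an output MLP $\psi$ applied to the attention output. *)

theory Defs
  imports Complex_Main
begin

text \<open>Vectors are represented as functions nat => real, with coordinates 0..dim-1
  (coordinates outside the dimension are 0). Matrices are nat => nat => real.\<close>

definition lin :: "nat \<Rightarrow> nat \<Rightarrow> (nat \<Rightarrow> nat \<Rightarrow> real) \<Rightarrow> (nat \<Rightarrow> real) \<Rightarrow> (nat \<Rightarrow> real)" where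
  "lin d e W u = (\<lambda>r. if r < d then (\<Sum>c<e. W r c * u c) else 0)"

definition det3 :: "(nat \<Rightarrow> real) \<Rightarrow> (nat \<Rightarrow> real) \<Rightarrow> (nat \<Rightarrow> real) \<Rightarrow> real" where
  "det3 a b c =
     a 0 * (b 1 * c 2 - b 2 * c 1)
   - b 0 * (a 1 * c 2 - a 2 * c 1)
   + c 0 * (a 1 * b 2 - a 2 * b 1)"

definition blk :: "(nat \<Rightarrow> real) \<Rightarrow> nat \<Rightarrow> (nat \<Rightarrow> real)" where
  "blk u l = (\<lambda>r. u (3 * l + r))"

definition sod_logit :: "nat \<Rightarrow> (nat \<Rightarrow> real) \<Rightarrow> (nat \<Rightarrow> real) \<Rightarrow> (nat \<Rightarrow> real) \<Rightarrow> real" where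
  "sod_logit d q k k' = (\<Sum>l < d div 3. det3 (blk q l) (blk k l) (blk k' l))"

text \<open>Input positions 1..N, input X.\<close>
definition tf_out ::
  "nat \<Rightarrow> nat \<Rightarrow> (nat \<Rightarrow> nat \<Rightarrow> real)
   \<Rightarrow> (nat \<Rightarrow> nat \<Rightarrow> real) \<Rightarrow> (nat \<Rightarrow> nat \<Rightarrow> real) \<Rightarrow> (nat \<Rightarrow> nat \<Rightarrow> real)
   \<Rightarrow> (nat \<Rightarrow> nat \<Rightarrow> real) \<Rightarrow> (nat \<Rightarrow> nat \<Rightarrow> real)
   \<Rightarrow> (nat \<Rightarrow> real) \<Rightarrow> (nat \<Rightarrow> real) \<Rightarrow> ((nat \<Rightarrow> real) \<Rightarrow> real)
   \<Rightarrow> nat \<Rightarrow> (nat \<Rightarrow> nat) \<Rightarrow> nat \<Rightarrow> real" where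
  "tf_out d e \<phi> Q K K' V V' kb vb \<psi> N X i =
     (let q = lin d e Q (\<phi> (X i));
          k = (\<lambda>j. lin d e K (\<phi> (X j)));
          k' = (\<lambda>j. lin d e K' (\<phi> (X j)));
          v = (\<lambda>j. lin d e V (\<phi> (X j)));
          v' = (\<lambda>j. lin d e V' (\<phi> (X j)));
          w = (\<lambda>j1 j2. exp (sod_logit d q (k j1) (k' j2)));
          wb = exp (\<Sum>r<d. q r * kb r);
          Z = wb + (\<Sum>j1\<in>{1..N}. \<Sum>j2\<in>{1..N}. w j1 j2);
          out = (\<lambda>r. if r < d then
                   (wb * vb r + (\<Sum>j1\<in>{1..N}. \<Sum>j2\<in>{1..N}. w j1 j2 * (v j1 r * v' j2 r))) / Z
                 else 0)
      in \<psi> out)"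

end

theory Submission
  imports Defs
begin

text \<open>Encode x \<in> [M] by the angle \<theta>(x) = 2\<pi>x/M. With rotation-type query and keys, the two
  3x3 determinants add up to the logit \<mu> cos(\<theta>(x_i) + \<theta>(x_j1) + \<theta>(x_j2)), which equals \<mu> exactly when
  M divides x_i + x_j1 + x_j2 and is at most \<mu>\<delta> otherwise, for a gap \<delta> < 1 depending only on M.
  A blank logit between \<mu>\<delta> + ln (N^2) and \<mu>, together with a value equal to 1 on every real
  pair and 0 on the blank, makes the attention output exceed 1/2 exactly when a matching
  pair exists; the output MLP thresholds at 1/2.\<close>

definition angle :: "nat \<Rightarrow> nat \<Rightarrow> real" where
  "angle M x = 2 * pi * real x / real M"

definition rot_query :: "real \<Rightarrow> real \<Rightarrow> nat \<Rightarrow> real" where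
  "rot_query \<mu> t r =
     (if r = 0 then \<mu> * cos t else if r = 3 then - \<mu> * sin t else if r = 6 then 1 else 0)"

definition rot_key :: "real \<Rightarrow> nat \<Rightarrow> real" where
  "rot_key t r = (if r = 1 \<or> r = 4 then cos t else if r = 2 \<or> r = 5 then sin t else 0)"

definition rot_key' :: "real \<Rightarrow> nat \<Rightarrow> real" where
  "rot_key' t r =
     (if r = 1 \<or> r = 5 then sin t else if r = 2 then cos t else if r = 4 then - cos t else 0)"

text \<open>Coordinates 0-6, 7-13 and 14-20 carry query, key and second key; coordinate 21 is the
  constant 1 and every coordinate from 22 on is 0.\<close>
definition match_embedding :: "real \<Rightarrow> nat \<Rightarrow> nat \<Rightarrow> nat \<Rightarrow> real" where
  "match_embedding \<mu> M x c =
     (if c < 7 then rot_query \<mu> (angle M x) c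
      else if c < 14 then rot_key (angle M x) (c - 7)
      else if c < 21 then rot_key' (angle M x) (c - 14)
      else if c = 21 then 1 else 0)"

definition select_matrix :: "(nat \<Rightarrow> nat) \<Rightarrow> nat \<Rightarrow> nat \<Rightarrow> real" where
  "select_matrix s r c = (if c = s r then 1 else 0)"

lemma lin_select_matrix:
  assumes "\<And>r. r < d \<Longrightarrow> s r < e"
  shows "lin d e (select_matrix s) u = (\<lambda>r. if r < d then u (s r) else 0)"
proof -
  have "(\<Sum>c<e. select_matrix s r c * u c) = u (s r)" if "r < d" for r
  proof -
    have "(\<Sum>c<e. select_matrix s r c * u c) = (\<Sum>c<e. if c = s r then u c else 0)"
      by (rule sum.cong) (auto simp: select_matrix_def)
    also have "\<dots> = u (s r)"
      using assms[OF that] by simp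
    finally show ?thesis .
  qed
  then show ?thesis
    by (auto simp: lin_def)
qed

lemma sod_logit_rot:
  "sod_logit 7 (rot_query \<mu> a) (rot_key b) (rot_key' c) = \<mu> * cos (a + b + c)"
proof -
  have "sod_logit 7 (rot_query \<mu> a) (rot_key b) (rot_key' c)
      = \<mu> * cos a * (cos b * cos c - sin b * sin c) - \<mu> * sin a * (cos b * sin c + sin b * cos c)"
    by (simp add: sod_logit_def det3_def blk_def rot_query_def rot_key_def rot_key'_def
        numeral_2_eq_2 lessThan_Suc algebra_simps)
  also have "\<dots> = \<mu> * cos (a + (b + c))"
    by (simp add: cos_add sin_add algebra_simps)
  finally show ?thesis
    by (simp add: add.assoc)
qed

lemma cos_angle_eq_1_iff:
  assumes "M > 0"
  shows "cos (angle M s) = 1 \<longleftrightarrow> M dvd s"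
proof
  assume "cos (angle M s) = 1"
  then obtain n :: int where "2 * pi * real s / real M = real_of_int n * 2 * pi"
    unfolding angle_def by (metis cos_one_2pi_int)
  then have "real s = real_of_int n * real M"
    using assms pi_gt_zero by (simp add: field_simps)
  then have "int s = n * int M"
    by (metis of_int_eq_iff of_int_mult of_int_of_nat_eq)
  then show "M dvd s"
    by (metis dvd_triv_right int_dvd_int_iff)
next
  assume "M dvd s"
  then obtain k where "s = M * k" ..
  then have "angle M s = real k * 2 * pi"
    using assms by (simp add: angle_def)
  then show "cos (angle M s) = 1"
    using cos_one_2pi by blast
qed

lemma cos_angle_gap:
  assumes "M > 0"
  obtains \<delta> where "\<delta> < 1" "\<And>s. s < L \<Longrightarrow> \<not> M dvd s \<Longrightarrow> cos (angle M s) \<le> \<delta>"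
proof
  define B where "B = (\<lambda>s. cos (angle M s)) ` {s. s < L \<and> \<not> M dvd s}"
  have "finite B"
    unfolding B_def by simp
  moreover have "b < 1" if "b \<in> B" for b
    using that cos_le_one cos_angle_eq_1_iff[OF assms] unfolding B_def
    by (force simp: order_less_le)
  ultimately show "Max (insert 0 B) < 1"
    by simp
  show "cos (angle M s) \<le> Max (insert 0 B)" if "s < L" "\<not> M dvd s" for s
    using that \<open>finite B\<close> unfolding B_def by simp
qed

lemma lin_match_embedding:
  "lin 7 23 (select_matrix (\<lambda>r. r)) (match_embedding \<mu> M x) = rot_query \<mu> (angle M x)"
  "lin 7 23 (select_matrix (\<lambda>r. r + 7)) (match_embedding \<mu> M x) = rot_key (angle M x)"
  "lin 7 23 (select_matrix (\<lambda>r. r + 14)) (match_embedding \<mu> M x) = rot_key' (angle M x)"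
  "lin 7 23 (select_matrix (\<lambda>r. if r = 0 then 21 else 22)) (match_embedding \<mu> M x)
     = (\<lambda>r. if r = 0 then 1 else 0)"
  by (subst lin_select_matrix; auto simp: fun_eq_iff match_embedding_def rot_query_def
      rot_key_def rot_key'_def)+

lemma angle_add: "angle M (a + b) = angle M a + angle M b"
  by (simp add: angle_def add_divide_distrib distrib_left)

definition blank_key :: "real \<Rightarrow> nat \<Rightarrow> real" where
  "blank_key \<beta> r = (if r = 6 then \<beta> else 0)"

definition threshold_half :: "(nat \<Rightarrow> real) \<Rightarrow> real" where
  "threshold_half u = (if 1 / 2 < u 0 then 1 else 0)"

lemma tf_out_match_net:
  "tf_out 7 23 (match_embedding \<mu> M) (select_matrix (\<lambda>r. r)) (select_matrix (\<lambda>r. r + 7))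
     (select_matrix (\<lambda>r. r + 14)) (select_matrix (\<lambda>r. if r = 0 then 21 else 22))
     (select_matrix (\<lambda>r. if r = 0 then 21 else 22)) (blank_key \<beta>) (\<lambda>_. 0) threshold_half N X i
   = (if exp \<beta> < (\<Sum>j1\<in>{1..N}. \<Sum>j2\<in>{1..N}. exp (\<mu> * cos (angle M (X i + X j1 + X j2))))
      then 1 else 0)"
    (is "_ = (if exp \<beta> < ?S then 1 else 0)")
proof -
  have blank_logit: "(\<Sum>r<7. rot_query \<mu> t r * blank_key \<beta> r) = \<beta>" for t
  proof -
    have "(\<Sum>r<7. rot_query \<mu> t r * blank_key \<beta> r) = (\<Sum>r<7::nat. if r = 6 then \<beta> else 0)"
      by (rule sum.cong) (auto simp: blank_key_def rot_query_def)
    then show ?thesis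
      by simp
  qed
  have "?S \<ge> 0"
    by (intro sum_nonneg) auto
  then have "1 / 2 < ?S / (exp \<beta> + ?S) \<longleftrightarrow> exp \<beta> < ?S"
    by (simp add: field_simps add_pos_nonneg)
  then show ?thesis
    by (simp add: tf_out_def Let_def lin_match_embedding sod_logit_rot blank_logit angle_add
        threshold_half_def add.assoc)
qed

text \<open>With \<mu> = (ln (N^2) + 1) / (1 - \<delta>) the bound N^2 exp (\<mu> \<delta>) for the non-matching
  scores is exactly exp (\<mu> - 1), while a single matching pair scores exp \<mu>.\<close>
lemma match_score_threshold:
  assumes "M > 0" and "N \<ge> 1" and "\<delta> < 1"
    and gap: "\<And>s. s < 3 * M \<Longrightarrow> \<not> M dvd s \<Longrightarrow> cos (angle M s) \<le> \<delta>"
    and X: "\<forall>j\<in>{1..N}. X j < M" and i: "i \<in> {1..N}"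
    and \<mu>_def: "\<mu> = (ln (real N ^ 2) + 1) / (1 - \<delta>)"
  shows "exp (\<mu> - 1) < (\<Sum>j1\<in>{1..N}. \<Sum>j2\<in>{1..N}. exp (\<mu> * cos (angle M (X i + X j1 + X j2))))
     \<longleftrightarrow> (\<exists>j1\<in>{1..N}. \<exists>j2\<in>{1..N}. M dvd X i + X j1 + X j2)"
    (is "_ < ?S \<longleftrightarrow> ?match")
proof -
  have "?S \<le> exp (\<mu> - 1)" if "\<not> ?match"
  proof -
    have "\<mu> \<ge> 0"
      using \<open>N \<ge> 1\<close> \<open>\<delta> < 1\<close> unfolding \<mu>_def by (simp add: one_le_power)
    have term_bound: "exp (\<mu> * cos (angle M (X i + X j1 + X j2))) \<le> exp (\<mu> * \<delta>)"
      if "j1 \<in> {1..N}" "j2 \<in> {1..N}" for j1 j2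
    proof -
      have "X i < M" "X j1 < M" "X j2 < M"
        using X i that by auto
      then have "X i + X j1 + X j2 < 3 * M"
        by linarith
      then have "cos (angle M (X i + X j1 + X j2)) \<le> \<delta>"
        using gap \<open>\<not> ?match\<close> that by blast
      then show ?thesis
        using \<open>\<mu> \<ge> 0\<close> by (simp add: mult_left_mono)
    qed
    then have "(\<Sum>j2\<in>{1..N}. exp (\<mu> * cos (angle M (X i + X j1 + X j2))))
        \<le> real (card {1..N}) * exp (\<mu> * \<delta>)" if "j1 \<in> {1..N}" for j1
      using that by (intro sum_bounded_above)
    then have "?S \<le> real (card {1..N}) * (real (card {1..N}) * exp (\<mu> * \<delta>))"
      by (rule sum_bounded_above)
    also have "\<dots> = exp (ln (real N ^ 2) + \<mu> * \<delta>)"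
      using \<open>N \<ge> 1\<close> by (simp add: exp_add power2_eq_square)
    also have "ln (real N ^ 2) + \<mu> * \<delta> = \<mu> - 1"
      using \<open>\<delta> < 1\<close> unfolding \<mu>_def by (simp add: field_simps)
    finally show ?thesis .
  qed
  moreover have "exp (\<mu> - 1) < ?S" if ?match
  proof -
    obtain j1 j2 where j: "j1 \<in> {1..N}" "j2 \<in> {1..N}" and "M dvd X i + X j1 + X j2"
      using \<open>?match\<close> by blast
    have "exp (\<mu> - 1) < exp \<mu>"
      by simp
    also have "\<dots> = exp (\<mu> * cos (angle M (X i + X j1 + X j2)))"
      using cos_angle_eq_1_iff[OF \<open>M > 0\<close>] \<open>M dvd X i + X j1 + X j2\<close> by simp
    also have "\<dots> \<le> (\<Sum>j2\<in>{1..N}. exp (\<mu> * cos (angle M (X i + X j1 + X j2))))"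
      using j(2) by (intro member_le_sum) auto
    also have "\<dots> \<le> ?S"
      using j(1) by (intro member_le_sum sum_nonneg) auto
    finally show ?thesis .
  qed
  ultimately show ?thesis
    by force
qed

theorem theorem1:
  fixes N M c :: nat
  assumes "N \<ge> 1" and "M \<ge> 1" and "M \<le> N ^ c"
  shows "\<exists>(e::nat) (\<phi>::nat \<Rightarrow> nat \<Rightarrow> real) Q K K' V V' kb vb \<psi>.
           \<forall>X::nat \<Rightarrow> nat. (\<forall>j\<in>{1..N}. X j < M) \<longrightarrow>
             (\<forall>i\<in>{1..N}. tf_out 7 e \<phi> Q K K' V V' kb vb \<psi> N X i =
                (if \<exists>j1\<in>{1..N}. \<exists>j2\<in>{1..N}. (X i + X j1 + X j2) mod M = 0 then 1 else 0))"
proof -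
  have "M > 0"
    using assms(2) by simp
  then obtain \<delta> where "\<delta> < 1" and gap: "\<And>s. s < 3 * M \<Longrightarrow> \<not> M dvd s \<Longrightarrow> cos (angle M s) \<le> \<delta>"
    using cos_angle_gap by blast
  define \<mu> where "\<mu> = (ln (real N ^ 2) + 1) / (1 - \<delta>)"
  define V where "V = select_matrix (\<lambda>r. if r = 0 then 21 else 22)"
  show ?thesis
  proof (intro exI allI impI ballI)
    fix X i
    assume "\<forall>j\<in>{1..N}. X j < M" and "i \<in> {1..N}"
    then show "tf_out 7 23 (match_embedding \<mu> M) (select_matrix (\<lambda>r. r))
        (select_matrix (\<lambda>r. r + 7)) (select_matrix (\<lambda>r. r + 14)) V V (blank_key (\<mu> - 1)) (\<lambda>_. 0)
        threshold_half N X i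
      = (if \<exists>j1\<in>{1..N}. \<exists>j2\<in>{1..N}. (X i + X j1 + X j2) mod M = 0 then 1 else 0)"
      unfolding V_def tf_out_match_net
      using match_score_threshold[OF \<open>M > 0\<close> assms(1) \<open>\<delta> < 1\<close> gap _ _ \<mu>_def]
      by (simp add: mod_eq_0_iff_dvd)
  qed
qed

end
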